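(* Let $q$ be a prime power and let $l$ be an odd prime with $l\nmid q$. Then every monic irreducible factor of $x^{l}-1$ in $\mathbb{F}_{q^2}[x]$ is SCRIM if and only if $\mathrm{ord}_l(q^2)$ is odd and $\mathrm{ord}_l(q)$ is even.
   Context: $\mathbb{F}_{q^2}$ is the finite field with $q^2$ elements. For $\alpha\in\mathbb{F}_{q^2}$ put $\bar\alpha=\alpha^q$, and for $f(x)=\sum_i f_ix^i\in\mathbb{F}_{q^2}[x]$ put $\overline{f(x)}=\sum_i \bar f_i x^i$. For $f(x)$ with $f(0)\neq 0$, its reciprocal is $f^*(x)=x^{\deg f}f(0)^{-1}f(1/x)$ and its conjugate-reciprocal is $f^\dagger(x)=\overline{f^*(x)}$. A polynomial $f(x)\in\mathbb{F}_{q^2}[x]$ is SCRIM (self-conjugate-reciprocal irreducible monic) if it is monic, irreducible, $f(0)\ne 0$, and $f(x)=f^\dagger(x)$. For coprime integers $m,a$, $\mathrm{ord}_m(a)$ is the least positive $s$ with $a^s\equiv 1 \pmod m$. *)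

theory Defs
  imports "HOL-Computational_Algebra.Computational_Algebra" "HOL-Number_Theory.Pocklington"
begin

definition conj_poly :: "nat \<Rightarrow> 'a::field poly \<Rightarrow> 'a poly" where
  "conj_poly q f = map_poly (\<lambda>c. c ^ q) f"

text \<open>Reciprocal f^*(x) = x^(deg f) f(0)^(-1) f(1/x); reflect_poly is x^(deg f) f(1/x).\<close>
definition recip_poly :: "'a::field poly \<Rightarrow> 'a poly" where
  "recip_poly f = Polynomial.smult (inverse (Polynomial.coeff f 0)) (reflect_poly f)"

definition conj_recip_poly :: "nat \<Rightarrow> 'a::field poly \<Rightarrow> 'a poly" where
  "conj_recip_poly q f = conj_poly q (recip_poly f)"

definition SCRIM :: "nat \<Rightarrow> 'a::field poly \<Rightarrow> bool" where
  "SCRIM q f \<longleftrightarrow> lead_coeff f = 1 \<and> irreducible f \<and> Polynomial.coeff f 0 \<noteq> 0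
      \<and> f = conj_recip_poly q f"

definition prime_power :: "nat \<Rightarrow> bool" where
  "prime_power q \<longleftrightarrow> (\<exists>p k. prime p \<and> k \<ge> 1 \<and> q = p ^ k)"

end

theory Submission
  imports Defs
begin

text \<open>
  Write F for the field, Q = q^2 for its size and x for the variable. Let f be an irreducible
  factor of x^l - 1 other than x - 1 and \<xi> a root of f. Then \<xi> has order l, the roots of f
  are the conjugates \<xi>^(Q^j), and f^\<dagger> is the minimal polynomial of \<xi>^(-q). Hence
  f = f^\<dagger> iff -q is a power of Q modulo l, a condition independent of f (and x - 1 is
  always SCRIM). This holds iff q^e = -1 (mod l) for some odd e, i.e. iff ord_l(q) is twice
  an odd number, which is the stated condition since ord_l(q^2) = ord_l(q) / gcd(2, ord_l(q)).

  No extension field is built: "h is a root of g in F[x]/(f)" is expressed as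
  f dvd pcompose g h. That the roots of f are conjugates of x is shown with
  U(Y) = \<Prod>j<d. (Y - x^(Q^j)), where x^(Q^d) = x modulo f. The Frobenius map permutes
  the linear factors of U, so every coefficient c of U satisfies c^Q = c modulo f and is
  therefore congruent to a constant, because Y^Q - Y = \<Prod>a\<in>F. (Y - a). The resulting
  polynomial over F vanishes at x modulo f, hence is a multiple of f, and evaluating at a
  root h of f gives f dvd U(h) = \<Prod>j<d. (h - x^(Q^j)).
\<close>

text \<open>The library's \<open>finite_field_power_card_eq_same\<close> needs the sort \<open>finite_field\<close>,
  which a type variable of sort \<open>{field,finite}\<close> does not have.\<close>
lemma power_card_eq_self:
  fixes x :: "'a::{field,finite}"
  shows "x ^ card (UNIV :: 'a set) = x"
proof (cases "x = 0")
  case True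
  then show ?thesis
    using finite_UNIV_card_ge_0[where 'a = 'a] by simp
next
  case False
  define U where "U = UNIV - {0 :: 'a}"
  have "bij_betw ((*) x) U U"
    by (rule bij_betwI[where g = "\<lambda>y. y / x"]) (use False in \<open>auto simp: U_def\<close>)
  then have "(\<Prod>y\<in>U. x * y) = \<Prod>U"
    by (rule prod.reindex_bij_betw)
  moreover have "(\<Prod>y\<in>U. x * y) = x ^ card U * \<Prod>U"
    by (simp add: prod.distrib)
  moreover have "\<Prod>U \<noteq> 0"
    by (simp add: U_def)
  ultimately have "x ^ card U = 1"
    by simp
  moreover have "card (UNIV :: 'a set) = Suc (card U)"
    by (simp add: U_def card_Diff_singleton Suc_diff_1 finite_UNIV_card_ge_0)
  ultimately show ?thesis
    by simp
qed

lemma power_card_power_eq_self: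
  fixes x :: "'a::{field,finite}"
  shows "x ^ (card (UNIV :: 'a set) ^ n) = x"
  by (induction n) (simp_all add: power_card_eq_self power_mult)

lemma prime_CHAR_finite: "prime CHAR('a::{idom,finite})"
  by (intro prime_CHAR_semidom finite_imp_CHAR_pos) simp

lemma CHAR_eq_if_card_eq_prime_power:
  assumes "prime p" and "card (UNIV :: 'a::{idom,finite} set) = p ^ n"
  shows "CHAR('a) = p"
proof -
  have "CHAR('a) dvd p ^ n"
    using CHAR_dvd_CARD[where 'a = 'a] assms(2) by simp
  then have "CHAR('a) dvd p"
    using prime_CHAR_finite prime_dvd_power by blast
  then show ?thesis
    using assms(1) prime_CHAR_finite primes_dvd_imp_eq by blast
qed

lemma prod_linear_eq_X_power_card_minus_X:
  "(\<Prod>a\<in>UNIV. [:- a, 1:]) = [:0, 1:] ^ card (UNIV :: 'a::{field,finite} set) - [:0, 1 :: 'a:]"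
  (is "?P = ?R")
proof (rule poly_eqI_degree_lead_coeff[where A = "UNIV :: 'a set" and n = "card (UNIV :: 'a set)"])
  let ?n = "card (UNIV :: 'a set)"
  have "card {0 :: 'a, 1} \<le> ?n"
    by (rule card_mono) simp_all
  then have n: "?n \<ge> 2"
    by simp
  have deg: "degree ?P = ?n"
    by (simp add: degree_prod_eq_sum_degree)
  have "Polynomial.coeff ?R ?n = 1"
    using n by (simp add: coeff_pCons split: nat.split flip: monom_altdef[of 1, simplified])
  then show "Polynomial.coeff ?P ?n = Polynomial.coeff ?R ?n"
    using lead_coeff_prod[of "\<lambda>a :: 'a. [:- a, 1:]" UNIV] by (simp add: deg)
  show "degree ?P \<le> ?n"
    using deg by simp
  show "degree ?R \<le> ?n"
    using n by (intro degree_diff_le) (simp_all add: degree_power_eq)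
  show "poly ?P z = poly ?R z" for z
    by (simp add: poly_prod power_card_eq_self)
qed simp

lemma pcompose_X_power: "pcompose ([:0, 1:] ^ n) p = p ^ n"
  by (induction n) (simp_all add: pcompose_mult pcompose_1 pcompose_pCons)

lemma prime_elem_dvd_prodE:
  fixes p :: "'a::algebraic_semidom"
  assumes "prime_elem p" and "p dvd prod f A"
  obtains a where "a \<in> A" and "p dvd f a"
  using assms prime_elem_dvd_prod_msetE[of p "image_mset f (mset_set A)"]
  by (cases "finite A") (auto simp: prod_unfold_prod_mset prime_elem_not_unit)

lemma prime_elem_dvd_frobenius_fixed_imp_const:
  fixes f h :: "'a::{field,finite} poly"
  assumes "prime_elem f" and "f dvd h ^ card (UNIV :: 'a set) - h"
  obtains a where "f dvd h - [:a:]"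
proof -
  have "h ^ card (UNIV :: 'a set) - h = pcompose (\<Prod>a\<in>UNIV. [:- a, 1:]) h"
    by (simp add: prod_linear_eq_X_power_card_minus_X pcompose_diff pcompose_pCons pcompose_X_power)
  also have "\<dots> = (\<Prod>a\<in>UNIV. h - [:a:])"
    by (simp add: pcompose_prod pcompose_pCons diff_conv_add_uminus add.commute)
  finally show ?thesis
    using assms prime_elem_dvd_prodE that by metis
qed

lemma pcompose_power_CHAR:
  fixes g h :: "'a::comm_ring_1 poly"
  assumes "prime CHAR('a)" and "m = CHAR('a) ^ s"
  shows "pcompose g h ^ m = pcompose (map_poly (\<lambda>c. c ^ m) g) (h ^ m)"
proof -
  have "m > 0"
    using assms by (simp add: prime_gt_0_nat)
  have sum_power: "(u + v) ^ m = u ^ m + v ^ m" for u v :: "'a poly"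
    by (rule freshmans_dream') (use assms in simp_all)
  show ?thesis
  proof (induction g)
    case (pCons a g)
    have "pcompose (pCons a g) h ^ m = ([:a:] + h * pcompose g h) ^ m"
      by (simp add: pcompose_pCons)
    also have "\<dots> = [:a ^ m:] + h ^ m * pcompose (map_poly (\<lambda>c. c ^ m) g) (h ^ m)"
      by (simp add: sum_power power_mult_distrib poly_const_pow pCons.IH)
    also have "\<dots> = pcompose (map_poly (\<lambda>c. c ^ m) (pCons a g)) (h ^ m)"
      using \<open>m > 0\<close> by (simp add: map_poly_pCons power_0_left pcompose_pCons)
    finally show ?case .
  qed (use \<open>m > 0\<close> in \<open>simp add: power_0_left\<close>)
qed

lemma minus_power_CHAR:
  fixes x :: "'a::comm_ring_1"
  assumes "prime CHAR('a)" and "m = CHAR('a) ^ s"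
  shows "(- x) ^ m = - (x ^ m)"
proof -
  have "m > 0"
    using assms by (simp add: prime_gt_0_nat)
  then have "0 = (x + - x) ^ m"
    by (simp add: power_0_left)
  also have "\<dots> = x ^ m + (- x) ^ m"
    using assms by (rule freshmans_dream')
  finally show ?thesis
    by (simp add: eq_neg_iff_add_eq_0 add.commute)
qed

lemma map_poly_power_CHAR_prod:
  fixes g :: "'b \<Rightarrow> 'a::idom poly"
  assumes "prime CHAR('a)" and "m = CHAR('a) ^ s"
  shows "map_poly (\<lambda>c. c ^ m) (\<Prod>i\<in>A. g i) = (\<Prod>i\<in>A. map_poly (\<lambda>c. c ^ m) (g i))"
proof -
  let ?Y = "[:0, 1:] :: 'a poly"
  \<comment> \<open>Both sides, composed with \<open>Y ^ m\<close>, give \<open>(\<Prod>i\<in>A. g i) ^ m\<close>.\<close>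
  have frob: "pcompose (map_poly (\<lambda>c. c ^ m) p) (?Y ^ m) = p ^ m" for p
    using pcompose_power_CHAR[OF assms, of p ?Y] by simp
  have "pcompose (map_poly (\<lambda>c. c ^ m) (\<Prod>i\<in>A. g i)
                    - (\<Prod>i\<in>A. map_poly (\<lambda>c. c ^ m) (g i))) (?Y ^ m) = 0"
    by (simp add: pcompose_diff pcompose_prod frob prod_power_distrib)
  moreover have "degree (?Y ^ m) > 0"
    using assms by (simp add: degree_power_eq prime_gt_0_nat)
  ultimately show ?thesis
    using pcompose_eq_0 by fastforce
qed

lemma pcompose_power_card_power:
  fixes g h :: "'a::{field,finite} poly"
  assumes "card (UNIV :: 'a set) = CHAR('a) ^ s"
  shows "pcompose g h ^ (card (UNIV :: 'a set) ^ n) = pcompose g (h ^ (card (UNIV :: 'a set) ^ n))"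
proof -
  have "card (UNIV :: 'a set) ^ n = CHAR('a) ^ (s * n)"
    by (simp add: assms power_mult)
  from pcompose_power_CHAR[OF prime_CHAR_finite this]
  show ?thesis
    by (simp add: power_card_power_eq_self)
qed

section \<open>Roots of a prime factor are Frobenius conjugates\<close>

definition conjugates_poly :: "nat \<Rightarrow> 'a::{field,finite} poly poly" where
  "conjugates_poly d = (\<Prod>j<d. [:- ([:0, 1:] ^ (card (UNIV :: 'a set) ^ j)), 1:])"

lemma coeff_conjugates_poly_frobenius:
  fixes f :: "'a::{field,finite} poly"
  assumes card: "card (UNIV :: 'a set) = CHAR('a) ^ s" and "d > 0"
    and f: "f dvd [:0, 1:] ^ (card (UNIV :: 'a set) ^ d) - [:0, 1:]"
  shows "f dvd Polynomial.coeff (conjugates_poly d) k ^ card (UNIV :: 'a set)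
                 - Polynomial.coeff (conjugates_poly d) k"
proof -
  let ?Q = "card (UNIV :: 'a set)" and ?X = "[:0, 1:] :: 'a poly"
  define g :: "nat \<Rightarrow> 'a poly poly" where "g j = [:- (?X ^ (?Q ^ j)), 1:]" for j
  define U :: "'a poly poly" where "U = conjugates_poly d"
  have U: "U = (\<Prod>j<d. g j)"
    by (simp add: U_def conjugates_poly_def g_def)
  have char: "prime CHAR('a poly)" "?Q = CHAR('a poly) ^ s"
    using card prime_CHAR_finite[where 'a = 'a] by simp_all
  have Q: "?Q > 0"
    by (simp add: finite_UNIV_card_ge_0)
  have "map_poly (\<lambda>c. c ^ ?Q) (g j) = g (Suc j)" for j
    using Q minus_power_CHAR[OF char]
    by (simp add: g_def map_poly_pCons power_0_left power_mult[symmetric] mult.commute)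
  then have map_U: "map_poly (\<lambda>c. c ^ ?Q) U = (\<Prod>j<d. g (Suc j))"
    by (simp add: U map_poly_power_CHAR_prod[OF char])
  obtain e where d: "d = Suc e"
    using \<open>d > 0\<close> gr0_implies_Suc by blast
  define W where "W = (\<Prod>j<e. g (Suc j))"
  have map_U': "map_poly (\<lambda>c. c ^ ?Q) U = W * g d"
    by (simp only: map_U W_def d prod.lessThan_Suc)
  have U': "U = g 0 * W"
    by (simp only: U W_def d prod.lessThan_Suc_shift)
  have "map_poly (\<lambda>c. c ^ ?Q) U - U = (g d - g 0) * W"
    by (metis U' map_U' left_diff_distrib mult.commute)
  also have "g d - g 0 = [:?X - ?X ^ (?Q ^ d):]"
    by (simp add: g_def)
  finally have "Polynomial.coeff (map_poly (\<lambda>c. c ^ ?Q) U - U) k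
                  = (?X - ?X ^ (?Q ^ d)) * Polynomial.coeff W k"
    by simp
  then have "Polynomial.coeff U k ^ ?Q - Polynomial.coeff U k
               = (?X - ?X ^ (?Q ^ d)) * Polynomial.coeff W k"
    using Q by (simp add: coeff_map_poly power_0_left)
  moreover have "f dvd ?X - ?X ^ (?Q ^ d)"
    using f by (simp add: dvd_diff_commute)
  ultimately show ?thesis
    by (simp add: U_def)
qed

lemma coeffs_cong_const_imp_poly_cong:
  fixes f :: "'a::field poly" and U :: "'a poly poly"
  assumes "degree f > 0" and "\<And>k. \<exists>a. f dvd Polynomial.coeff U k - [:a:]"
  obtains \<mu> where "\<And>w. f dvd poly U w - pcompose \<mu> w"
proof -
  define \<mu> where "\<mu> = map_poly (\<lambda>c. Polynomial.coeff (c mod f) 0) U"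
  define D where "D = U - map_poly (\<lambda>a. [:a:]) \<mu>"
  have "f dvd Polynomial.coeff D k" for k
  proof -
    obtain a where a: "f dvd Polynomial.coeff U k - [:a:]"
      using assms(2) by blast
    have "Polynomial.coeff U k mod f = [:a:] mod f"
      using a by (simp add: mod_eq_dvd_iff)
    also have "[:a:] mod f = [:a:]"
      using assms(1) by (intro mod_poly_less) simp
    finally show ?thesis
      using a by (simp add: D_def \<mu>_def coeff_map_poly)
  qed
  then have "f dvd poly D w" for w
    by (simp add: poly_altdef dvd_sum)
  moreover have "poly D w = poly U w - pcompose \<mu> w" for w
    by (simp add: D_def pcompose_altdef)
  ultimately show ?thesis
    using that[of \<mu>] by simp
qed

lemma prime_elem_dvd_pcompose_self_imp_conjugate:
  fixes f h :: "'a::{field,finite} poly"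
  assumes card: "card (UNIV :: 'a set) = CHAR('a) ^ s" and f: "prime_elem f" and "d > 0"
    and f_conj: "f dvd [:0, 1:] ^ (card (UNIV :: 'a set) ^ d) - [:0, 1:]"
    and root: "f dvd pcompose f h"
  obtains j where "j < d" and "f dvd h - [:0, 1:] ^ (card (UNIV :: 'a set) ^ j)"
proof -
  let ?Q = "card (UNIV :: 'a set)" and ?X = "[:0, 1:] :: 'a poly"
  have "degree f > 0"
    using f is_unit_iff_degree prime_elem_not_unit by (metis gr0I prime_elem_not_zeroI)
  moreover have "\<exists>a. f dvd Polynomial.coeff (conjugates_poly d) k - [:a:]" for k
    using coeff_conjugates_poly_frobenius[OF card \<open>d > 0\<close> f_conj]
      prime_elem_dvd_frobenius_fixed_imp_const[OF f] by metis
  ultimately obtain \<mu> where \<mu>: "\<And>w. f dvd poly (conjugates_poly d) w - pcompose \<mu> w"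
    using coeffs_cong_const_imp_poly_cong by blast
  have poly_U: "poly (conjugates_poly d) w = (\<Prod>j<d. w - ?X ^ (?Q ^ j))" for w
    by (simp add: conjugates_poly_def poly_prod)
  have "poly (conjugates_poly d) ?X = 0"
    using \<open>d > 0\<close> by (auto simp: poly_U intro!: prod_zero bexI[of _ 0])
  then have "f dvd \<mu>"
    using \<mu>[of ?X] by simp
  then have "f dvd pcompose \<mu> h"
    using root by (metis dvdE dvd_mult2 pcompose_mult)
  then have "f dvd poly (conjugates_poly d) h"
    using \<mu>[of h] by (metis diff_add_cancel dvd_add)
  then have "f dvd (\<Prod>j<d. h - ?X ^ (?Q ^ j))"
    by (simp add: poly_U)
  then show ?thesis
    using prime_elem_dvd_prodE[OF f] that by blast
qed

lemma power_diff_dvd_if_cong: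
  fixes y :: "'a::comm_ring_1"
  assumes "[a = b] (mod l)"
  shows "y ^ l - 1 dvd y ^ a - y ^ b"
proof -
  have reduce: "y ^ l - 1 dvd y ^ n - y ^ (n mod l)" for n
  proof -
    have "y ^ n - y ^ (n mod l) = y ^ (n mod l) * ((y ^ l) ^ (n div l) - 1)"
      by (simp add: algebra_simps flip: power_add power_mult)
    moreover have "y ^ l - 1 dvd (y ^ l) ^ (n div l) - 1"
      by (simp add: power_diff_1_eq)
    ultimately show ?thesis
      by simp
  qed
  have "y ^ a - y ^ b = (y ^ a - y ^ (a mod l)) - (y ^ b - y ^ (b mod l))"
    using assms by (simp add: cong_def)
  then show ?thesis
    by (metis reduce dvd_diff)
qed

lemma dvd_pcompose_diff:
  fixes m u v :: "'a::comm_ring_1 poly"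
  assumes "m dvd u - v"
  shows "m dvd pcompose p u - pcompose p v"
proof (induction p)
  case (pCons a p)
  have "pcompose (pCons a p) u - pcompose (pCons a p) v
          = u * (pcompose p u - pcompose p v) + (u - v) * pcompose p v"
    by (simp add: pcompose_pCons algebra_simps)
  then show ?case
    using pCons.IH assms by simp
qed simp

lemma coeff_0_nonzero_if_dvd_X_power_minus_one:
  fixes f :: "'a::comm_ring_1 poly"
  assumes "f dvd [:0, 1:] ^ l - 1" and "l > 0"
  shows "Polynomial.coeff f 0 \<noteq> 0"
proof
  assume "Polynomial.coeff f 0 = 0"
  moreover obtain r where "[:0, 1:] ^ l - 1 = f * r"
    using assms(1) by blast
  ultimately have "Polynomial.coeff ([:0, 1:] ^ l - 1 :: 'a poly) 0 = 0"
    by (simp add: coeff_mult_0)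
  with assms(2) show False
    by (simp add: coeff_0_power power_0_left)
qed

lemma prime_elem_dvd_X_power_minus_one_not_dvd_X_power:
  fixes f :: "'a::idom poly"
  assumes "prime_elem f" and "f dvd [:0, 1:] ^ l - 1" and "l > 0"
  shows "\<not> f dvd [:0, 1:] ^ n"
proof
  assume "f dvd [:0, 1:] ^ n"
  then have "f dvd [:0, 1:] ^ l"
    using assms(1,3) prime_elem_dvd_power by (metis dvd_power dvd_trans)
  then have "f dvd [:0, 1:] ^ l - ([:0, 1:] ^ l - 1)"
    using assms(2) by (rule dvd_diff)
  with assms(1) show False
    by (simp add: prime_elem_not_unit)
qed

lemma dvd_if_dvd_X_power_minus_one:
  fixes f :: "'a::comm_ring_1 poly"
  assumes "prime l" and "f dvd [:0, 1:] ^ l - 1" and "\<not> f dvd [:0, 1:] - 1"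
    and "f dvd [:0, 1:] ^ n - 1"
  shows "l dvd n"
proof (rule ccontr)
  let ?X = "[:0, 1:] :: 'a poly"
  assume "\<not> l dvd n"
  then have "coprime n l"
    using assms(1) by (simp add: prime_imp_coprime coprime_commute)
  then obtain t where t: "[n * t = 1] (mod l)"
    using cong_solve_coprime_nat by auto
  have "?X ^ n - 1 dvd (?X ^ n) ^ t - 1"
    by (simp add: power_diff_1_eq)
  then have "f dvd ?X ^ (n * t) - 1"
    using assms(4) by (simp add: power_mult dvd_trans)
  moreover have "f dvd ?X ^ (n * t) - ?X ^ 1"
    using assms(2) power_diff_dvd_if_cong[OF t] by (rule dvd_trans)
  ultimately have "f dvd (?X ^ (n * t) - 1) - (?X ^ (n * t) - ?X)"
    by (simp only: power_one_right dvd_diff)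
  with assms(3) show False
    by simp
qed

lemma cong_if_prime_elem_dvd_X_power_diff:
  fixes f :: "'a::idom poly"
  assumes "prime l" and f: "prime_elem f" "f dvd [:0, 1:] ^ l - 1" "\<not> f dvd [:0, 1:] - 1"
    and "f dvd [:0, 1:] ^ a - [:0, 1:] ^ b"
  shows "[a = b] (mod l)"
proof -
  let ?X = "[:0, 1:] :: 'a poly"
  have "[a = b] (mod l)" if "b \<le> a" and "f dvd ?X ^ a - ?X ^ b" for a b
  proof -
    have "?X ^ a - ?X ^ b = ?X ^ b * (?X ^ (a - b) - 1)"
      using \<open>b \<le> a\<close> by (simp add: algebra_simps flip: power_add)
    moreover have "\<not> f dvd ?X ^ b"
      using prime_elem_dvd_X_power_minus_one_not_dvd_X_power f(1,2) assms(1) prime_gt_0_nat by blast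
    ultimately have "f dvd ?X ^ (a - b) - 1"
      using f(1) \<open>f dvd ?X ^ a - ?X ^ b\<close> prime_elem_dvd_mult_iff by metis
    then have "l dvd a - b"
      using dvd_if_dvd_X_power_minus_one assms(1) f(2,3) by blast
    with \<open>b \<le> a\<close> show ?thesis
      by (simp add: cong_altdef_nat)
  qed
  moreover have "f dvd ?X ^ b - ?X ^ a"
    using assms(5) by (metis dvd_minus_iff minus_diff_eq)
  ultimately show ?thesis
    using assms(5) by (metis cong_sym nat_le_linear)
qed

section \<open>The conjugate-reciprocal of a factor of \<open>x ^ l - 1\<close>\<close>

lemma reflect_poly_eq_sum:
  "reflect_poly p = (\<Sum>i\<le>degree p. Polynomial.monom (Polynomial.coeff p i) (degree p - i))"
proof (rule poly_eqI)
  fix n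
  have "{..degree p} \<inter> {i. degree p - i = n} = (if n \<le> degree p then {degree p - n} else {})"
    by auto
  then show "Polynomial.coeff (reflect_poly p) n
      = Polynomial.coeff (\<Sum>i\<le>degree p. Polynomial.monom (Polynomial.coeff p i) (degree p - i)) n"
    by (simp add: coeff_reflect_poly Polynomial.coeff_sum sum.If_cases)
qed

text \<open>Modulo \<open>x ^ l - 1\<close> the power \<open>x ^ (l - 1)\<close> is an inverse of \<open>x\<close>, and
  \<open>reflect_poly p\<close> evaluated at \<open>1/x\<close> is \<open>x ^ (-degree p) * p\<close>.\<close>
lemma X_power_mult_reflect_poly_pcompose_cong:
  fixes p :: "'a::comm_ring_1 poly"
  assumes "l > 0"
  shows "[:0, 1:] ^ l - 1 dvd [:0, 1:] ^ degree p * pcompose (reflect_poly p) ([:0, 1:] ^ (l - 1)) - p"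
proof -
  let ?X = "[:0, 1:] :: 'a poly" and ?n = "degree p"
  have "?X ^ ?n * pcompose (reflect_poly p) (?X ^ (l - 1))
      = (\<Sum>i\<le>?n. Polynomial.smult (Polynomial.coeff p i) (?X ^ (?n + (l - 1) * (?n - i))))"
    by (simp add: reflect_poly_eq_sum pcompose_sum sum_distrib_left monom_altdef pcompose_smult
        pcompose_X_power mult_smult_right flip: power_mult power_add)
  moreover have "(\<Sum>i\<le>?n. Polynomial.smult (Polynomial.coeff p i) (?X ^ i)) = p"
    using poly_as_sum_of_monoms[of p] by (simp add: monom_altdef)
  ultimately have "?X ^ ?n * pcompose (reflect_poly p) (?X ^ (l - 1)) - p
      = (\<Sum>i\<le>?n. Polynomial.smult (Polynomial.coeff p i) (?X ^ (?n + (l - 1) * (?n - i))))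
        - (\<Sum>i\<le>?n. Polynomial.smult (Polynomial.coeff p i) (?X ^ i))"
    by (simp only:)
  also have "\<dots> = (\<Sum>i\<le>?n. Polynomial.smult (Polynomial.coeff p i)
                                   (?X ^ (?n + (l - 1) * (?n - i)) - ?X ^ i))"
    by (simp add: smult_diff_right sum_subtractf)
  finally have expand: "?X ^ ?n * pcompose (reflect_poly p) (?X ^ (l - 1)) - p
      = (\<Sum>i\<le>?n. Polynomial.smult (Polynomial.coeff p i)
                        (?X ^ (?n + (l - 1) * (?n - i)) - ?X ^ i))" .
  moreover have "?X ^ l - 1 dvd ?X ^ (?n + (l - 1) * (?n - i)) - ?X ^ i" if "i \<le> ?n" for i
  proof (rule power_diff_dvd_if_cong)
    define d where "d = ?n - i"
    have "?n = i + d"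
      using that by (simp add: d_def)
    moreover obtain m where "l = Suc m"
      using assms gr0_implies_Suc by blast
    ultimately have "?n + (l - 1) * (?n - i) = i + (?n - i) * l"
      by (simp add: algebra_simps)
    then show "[?n + (l - 1) * (?n - i) = i] (mod l)"
      by (simp add: cong_def)
  qed
  then show ?thesis
    unfolding expand by (intro dvd_sum dvd_smult) simp
qed

lemma degree_conj_recip_poly:
  fixes f :: "'a::field poly"
  assumes "Polynomial.coeff f 0 \<noteq> 0" and "q > 0"
  shows "degree (conj_recip_poly q f) = degree f"
  using assms
  by (simp add: conj_recip_poly_def conj_poly_def recip_poly_def degree_map_poly power_0_left)

lemma lead_coeff_conj_recip_poly:
  fixes f :: "'a::field poly"
  assumes "Polynomial.coeff f 0 \<noteq> 0" and "q > 0"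
  shows "lead_coeff (conj_recip_poly q f) = 1"
  using assms
  by (simp add: conj_recip_poly_def conj_poly_def recip_poly_def lead_coeff_map_poly_nz
      coeff_reflect_poly power_0_left)

lemma prime_elem_dvd_conj_recip_poly_pcompose:
  fixes f :: "'a::field poly"
  assumes f: "prime_elem f" "f dvd [:0, 1:] ^ l - 1" and "l > 0"
    and "prime CHAR('a)" and q: "q = CHAR('a) ^ k"
  shows "f dvd pcompose (conj_recip_poly q f) ([:0, 1:] ^ ((l - 1) * q))"
proof -
  let ?X = "[:0, 1:] :: 'a poly"
  define R where "R = recip_poly f"
  have "f dvd ?X ^ degree f * pcompose (reflect_poly f) (?X ^ (l - 1))"
    using dvd_trans[OF f(2) X_power_mult_reflect_poly_pcompose_cong[OF \<open>l > 0\<close>, of f]]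
    by (metis diff_add_cancel dvd_add dvd_refl)
  moreover have "\<not> f dvd ?X ^ degree f"
    using prime_elem_dvd_X_power_minus_one_not_dvd_X_power f \<open>l > 0\<close> by blast
  ultimately have "f dvd pcompose (reflect_poly f) (?X ^ (l - 1))"
    using f(1) prime_elem_dvd_mult_iff by blast
  then have "f dvd pcompose R (?X ^ (l - 1))"
    by (simp add: R_def recip_poly_def pcompose_smult dvd_smult)
  moreover have "q > 0"
    using assms by (simp add: prime_gt_0_nat)
  ultimately have "f dvd pcompose R (?X ^ (l - 1)) ^ q"
    by (intro dvd_trans[OF _ dvd_power]) simp_all
  also have "pcompose R (?X ^ (l - 1)) ^ q = pcompose (conj_recip_poly q f) (?X ^ ((l - 1) * q))"
    using pcompose_power_CHAR[OF \<open>prime CHAR('a)\<close> q]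
    by (simp add: R_def conj_recip_poly_def conj_poly_def power_mult)
  finally show ?thesis .
qed

lemma monic_dvd_imp_eq:
  fixes f g :: "'a::idom poly"
  assumes "f dvd g" and "lead_coeff f = 1" and "lead_coeff g = 1" and "degree g \<le> degree f"
  shows "f = g"
proof -
  obtain r where g: "g = f * r"
    using assms(1) by blast
  have "g \<noteq> 0"
    using assms(3) by auto
  then have "f \<noteq> 0" and "r \<noteq> 0"
    using g by auto
  then have "degree r = 0"
    using assms(4) g degree_mult_eq by fastforce
  moreover have "lead_coeff r = 1"
    using assms(2,3) g by (simp add: lead_coeff_mult)
  ultimately have "r = 1"
    by (metis degree_eq_zeroE lead_coeff_pCons(2) one_pCons pCons_0_0)
  with g show ?thesis
    by simp
qed

lemma SCRIM_if_cong:
  fixes f :: "'a::{field,finite} poly"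
  assumes card: "card (UNIV :: 'a set) = q ^ 2" and q: "q = CHAR('a) ^ k"
    and f: "irreducible f" "lead_coeff f = 1" "f dvd [:0, 1:] ^ l - 1" and "l > 0"
    and cong: "[(l - 1) * q = (q ^ 2) ^ j] (mod l)"
  shows "SCRIM q f"
proof -
  let ?X = "[:0, 1:] :: 'a poly" and ?Q = "card (UNIV :: 'a set)"
  have prime: "prime_elem f"
    using f(1) by (rule field_poly_irreducible_imp_prime)
  define g where "g = conj_recip_poly q f"
  have card_CHAR: "?Q = CHAR('a) ^ (k * 2)"
    by (simp add: card q power_mult)
  have "q > 0"
    using q prime_CHAR_finite[where 'a = 'a] by (simp add: prime_gt_0_nat)
  have root: "f dvd pcompose g (?X ^ ((l - 1) * q))"
    using prime_elem_dvd_conj_recip_poly_pcompose[OF prime f(3) \<open>l > 0\<close> prime_CHAR_finite q]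
    by (simp add: g_def)
  have "?X ^ l - 1 dvd pcompose g (?X ^ ((l - 1) * q)) - pcompose g (?X ^ (?Q ^ j))"
    using cong card by (intro dvd_pcompose_diff power_diff_dvd_if_cong) simp
  with f(3) have "f dvd pcompose g (?X ^ ((l - 1) * q)) - pcompose g (?X ^ (?Q ^ j))"
    by (rule dvd_trans)
  from dvd_diff[OF root this] have "f dvd pcompose g (?X ^ (?Q ^ j))"
    by simp
  also have "pcompose g (?X ^ (?Q ^ j)) = g ^ (?Q ^ j)"
    using pcompose_power_card_power[OF card_CHAR, of g ?X j] by simp
  finally have "f dvd g"
    using prime prime_elem_dvd_power by blast
  moreover have "Polynomial.coeff f 0 \<noteq> 0"
    using coeff_0_nonzero_if_dvd_X_power_minus_one f(3) \<open>l > 0\<close> by blast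
  ultimately have "f = g"
    using monic_dvd_imp_eq[OF \<open>f dvd g\<close> f(2)] \<open>q > 0\<close>
      lead_coeff_conj_recip_poly[of f q] degree_conj_recip_poly[of f q]
    by (simp add: g_def)
  then show ?thesis
    using f \<open>Polynomial.coeff f 0 \<noteq> 0\<close> by (simp add: SCRIM_def g_def)
qed

lemma cong_if_conj_recip_poly_eq_self:
  fixes f :: "'a::{field,finite} poly"
  assumes card: "card (UNIV :: 'a set) = q ^ 2" and q: "q = CHAR('a) ^ k"
    and l: "prime l" "\<not> l dvd q"
    and f: "prime_elem f" "f dvd [:0, 1:] ^ l - 1" "\<not> f dvd [:0, 1:] - 1"
    and self: "conj_recip_poly q f = f"
  shows "\<exists>j. [(l - 1) * q = (q ^ 2) ^ j] (mod l)"
proof -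
  let ?X = "[:0, 1:] :: 'a poly" and ?Q = "card (UNIV :: 'a set)"
  have "l > 1"
    using l(1) prime_gt_1_nat by blast
  have "\<not> l dvd ?Q"
    using l card by (auto dest: prime_dvd_power)
  then have "[?Q ^ (l - 1) = 1] (mod l)"
    using l(1) fermat_theorem by blast
  then have "?X ^ l - 1 dvd ?X ^ (?Q ^ (l - 1)) - ?X ^ 1"
    by (rule power_diff_dvd_if_cong)
  then have conj: "f dvd ?X ^ (?Q ^ (l - 1)) - ?X"
    using dvd_trans[OF f(2)] by simp
  have "f dvd pcompose f (?X ^ ((l - 1) * q))"
    using prime_elem_dvd_conj_recip_poly_pcompose[OF f(1,2) _ prime_CHAR_finite q] \<open>l > 1\<close> self
    by simp
  moreover have "?Q = CHAR('a) ^ (k * 2)"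
    by (simp add: card q power_mult)
  ultimately obtain j where "f dvd ?X ^ ((l - 1) * q) - ?X ^ (?Q ^ j)"
    using prime_elem_dvd_pcompose_self_imp_conjugate[of "k * 2" f "l - 1"] conj f(1) \<open>l > 1\<close>
    by auto
  then have "[(l - 1) * q = ?Q ^ j] (mod l)"
    using cong_if_prime_elem_dvd_X_power_diff l(1) f by blast
  with card show ?thesis
    by auto
qed

section \<open>The condition on the multiplicative orders\<close>

lemma cong_minus_iff_odd_power_cong_minus_one:
  fixes l q :: nat
  assumes "prime l" and "odd l" and "\<not> l dvd q"
  shows "(\<exists>j. [(l - 1) * q = (q ^ 2) ^ j] (mod l)) \<longleftrightarrow> (\<exists>e. odd e \<and> [int q ^ e = - 1] (mod int l))"
proof -
  have "l \<ge> 2"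
    using assms(1) prime_ge_2_nat by blast
  have minus: "[int ((l - 1) * q) = - int q] (mod int l)"
    using \<open>l \<ge> 2\<close> by (simp add: cong_iff_dvd_diff of_nat_diff algebra_simps)
  have iff: "[(l - 1) * q = (q ^ 2) ^ j] (mod l) \<longleftrightarrow> [- int q = int q ^ (2 * j)] (mod int l)" for j
    using cong_int_iff[of "(l - 1) * q" "(q ^ 2) ^ j" l] minus
    by (metis cong_sym_eq cong_trans of_nat_power power_mult)
  have fermat: "[int q ^ (l - 1) = 1] (mod int l)"
    using fermat_theorem[OF assms(1,3)] cong_int_iff[of "q ^ (l - 1)" 1 l] by simp
  show ?thesis
  proof
    assume "\<exists>j. [(l - 1) * q = (q ^ 2) ^ j] (mod l)"
    then obtain j where j: "[- int q = int q ^ (2 * j)] (mod int l)"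
      using iff by blast
    have "int q ^ (2 * j + (l - 2)) = int q ^ (2 * j) * int q ^ (l - 2)"
      by (simp add: power_add)
    also have "[\<dots> = - int q * int q ^ (l - 2)] (mod int l)"
      using j by (intro cong_mult cong_refl) (rule cong_sym)
    also have "- int q * int q ^ (l - 2) = - (int q ^ (l - 1))"
      using \<open>l \<ge> 2\<close> by (simp flip: power_Suc) (simp add: Suc_diff_Suc numeral_2_eq_2)
    also have "[\<dots> = - 1] (mod int l)"
      using fermat by (rule cong_minus_minus_iff[THEN iffD2])
    finally show "\<exists>e. odd e \<and> [int q ^ e = - 1] (mod int l)"
      using assms(2) \<open>l \<ge> 2\<close> by (intro exI[of _ "2 * j + (l - 2)"]) simp
  next
    assume "\<exists>e. odd e \<and> [int q ^ e = - 1] (mod int l)"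
    then obtain e where "odd e" and e: "[int q ^ e = - 1] (mod int l)"
      by blast
    have "int q ^ (2 * (Suc e div 2)) = int q ^ e * int q"
      using \<open>odd e\<close> by (simp add: power_Suc2 flip: power_Suc)
    also have "[\<dots> = - 1 * int q] (mod int l)"
      using e by (intro cong_mult cong_refl)
    finally have "[- int q = int q ^ (2 * (Suc e div 2))] (mod int l)"
      by (simp add: cong_sym_eq)
    then show "\<exists>j. [(l - 1) * q = (q ^ 2) ^ j] (mod l)"
      using iff by blast
  qed
qed

lemma odd_power_cong_minus_one_iff_ord:
  fixes l q :: nat
  assumes "prime l" and "odd l" and "coprime l q"
  shows "(\<exists>e. odd e \<and> [int q ^ e = - 1] (mod int l)) \<longleftrightarrow> odd (ord l (q ^ 2)) \<and> even (ord l q)"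
proof -
  define n where "n = ord l q"
  have "l > 2"
    using assms(1,2) prime_ge_2_nat by (metis dvd_refl le_neq_implies_less)
  have n_pos: "n > 0"
    using assms(3) by (simp add: n_def)
  have q_pos: "q > 0"
    using assms(1,3) by (cases q) auto
  have nat_int: "[q ^ m = 1] (mod l) \<longleftrightarrow> [int q ^ m = 1] (mod int l)" for m
    using cong_int_iff[of "q ^ m" 1 l] by simp
  have ord_square: "ord l (q ^ 2) = n div gcd 2 n"
    using ord_power[OF assms(3)] by (simp add: n_def)
  have "(\<exists>e. odd e \<and> [int q ^ e = - 1] (mod int l)) \<longleftrightarrow> (\<exists>m. odd m \<and> n = 2 * m)"
  proof
    assume "\<exists>e. odd e \<and> [int q ^ e = - 1] (mod int l)"
    then obtain e where "odd e" and e: "[int q ^ e = - 1] (mod int l)"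
      by blast
    have "[int q ^ e * int q ^ e = - 1 * - 1] (mod int l)"
      by (rule cong_mult[OF e e])
    then have "[int q ^ (2 * e) = 1] (mod int l)"
      by (simp add: mult_2 power_add)
    then have "[q ^ (2 * e) = 1] (mod l)"
      using nat_int by blast
    then have "n dvd 2 * e"
      by (simp add: n_def ord_divides')
    have "\<not> n dvd e"
    proof
      assume "n dvd e"
      then have "[q ^ e = 1] (mod l)"
        by (simp add: n_def ord_divides')
      with e have "[- 1 = 1 :: int] (mod int l)"
        by (metis nat_int cong_sym cong_trans)
      then have "l dvd 2"
        using int_dvd_int_iff[of l 2] by (simp add: cong_iff_dvd_diff)
      with \<open>l > 2\<close> show False
        using dvd_imp_le by fastforce
    qed
    have "even n"
    proof (rule ccontr)
      assume "odd n"
      then have "coprime n 2"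
        by simp
      with \<open>n dvd 2 * e\<close> show False
        using \<open>\<not> n dvd e\<close> coprime_dvd_mult_right_iff by blast
    qed
    then obtain m where m: "n = 2 * m"
      by blast
    with \<open>n dvd 2 * e\<close> have "m dvd e"
      by simp
    have "odd m"
    proof
      assume "even m"
      then have "2 dvd e"
        using \<open>m dvd e\<close> by (rule dvd_trans)
      with \<open>odd e\<close> show False ..
    qed
    with m show "\<exists>m. odd m \<and> n = 2 * m"
      by blast
  next
    assume "\<exists>m. odd m \<and> n = 2 * m"
    then obtain m where "odd m" and m: "n = 2 * m"
      by blast
    have "[q ^ (2 * m) = 1] (mod l)"
      using ord[of q l] by (simp add: m flip: n_def)
    then have "[int q ^ (2 * m) = 1] (mod int l)"
      using nat_int by blast
    then have "[int q ^ m * int q ^ m = 1] (mod int l)"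
      by (simp add: mult_2 power_add)
    then have "[int q ^ m = 1] (mod int l) \<or> [int q ^ m = - 1] (mod int l)"
      using cong_square[of "int l" "int q ^ m"] assms(1) q_pos by simp
    moreover have "\<not> [q ^ m = 1] (mod l)"
      using ord_minimal[of m l q] n_pos m unfolding n_def by simp
    then have "\<not> [int q ^ m = 1] (mod int l)"
      using nat_int by blast
    ultimately show "\<exists>e. odd e \<and> [int q ^ e = - 1] (mod int l)"
      using \<open>odd m\<close> by blast
  qed
  also have "(\<exists>m. odd m \<and> n = 2 * m) \<longleftrightarrow> odd (ord l (q ^ 2)) \<and> even n"
    by (cases "even n") (auto simp: ord_square)
  finally show ?thesis
    by (simp add: n_def)
qed

lemma monic_prime_elem_factor_exists:
  fixes p :: "'a::field poly"
  assumes "degree p > 0"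
  obtains f where "prime_elem f" and "lead_coeff f = 1" and "f dvd p"
proof -
  have "p \<noteq> 0"
    using assms by auto
  have "\<exists>P. prod_mset P = Polynomial.smult (inverse (lead_coeff p)) p
             \<and> (\<forall>g. g \<in># P \<longrightarrow> prime_elem g)"
    using field_poly_prod_mset_prime_factorization[OF \<open>p \<noteq> 0\<close>]
      field_poly_in_prime_factorization_imp_prime by blast
  then obtain P where P: "prod_mset P = Polynomial.smult (inverse (lead_coeff p)) p"
    and P_prime: "\<And>g. g \<in># P \<Longrightarrow> prime_elem g"
    by blast
  have "P \<noteq> {#}"
  proof
    assume "P = {#}"
    with P have "degree (Polynomial.smult (inverse (lead_coeff p)) p) = 0"
      by (metis degree_1 prod_mset_empty)
    with assms \<open>p \<noteq> 0\<close> show False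
      by simp
  qed
  then obtain g where g: "g \<in># P"
    by blast
  then have "prime_elem g"
    by (rule P_prime)
  have "g dvd Polynomial.smult (inverse (lead_coeff p)) p"
    using dvd_prod_mset[OF g] P by simp
  then have "g dvd p"
    using \<open>p \<noteq> 0\<close> by (simp add: dvd_smult_cancel)
  define f where "f = Polynomial.smult (inverse (lead_coeff g)) g"
  have "g \<noteq> 0"
    using \<open>prime_elem g\<close> by (rule prime_elem_not_zeroI)
  then have "is_unit [:inverse (lead_coeff g):]"
    by (simp add: is_unit_const_poly_iff dvd_field_iff)
  moreover have "f = [:inverse (lead_coeff g):] * g"
    by (simp add: f_def)
  ultimately have "prime_elem f"
    using \<open>prime_elem g\<close> prime_elem_mult_unit_left by metis
  moreover have "lead_coeff f = 1"
    using \<open>g \<noteq> 0\<close> by (simp add: f_def)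
  moreover have "f dvd p"
    using \<open>g dvd p\<close> \<open>g \<noteq> 0\<close> by (simp add: f_def smult_dvd_iff)
  ultimately show ?thesis
    using that by blast
qed

lemma nontrivial_factor_of_X_power_minus_one_exists:
  fixes l :: nat
  assumes "l \<ge> 2" and "of_nat l \<noteq> (0 :: 'a)"
  obtains f :: "'a::field poly"
  where "prime_elem f" and "lead_coeff f = 1" and "f dvd [:0, 1:] ^ l - 1" and "\<not> f dvd [:0, 1:] - 1"
proof -
  let ?X = "[:0, 1:] :: 'a poly"
  define \<Phi> where "\<Phi> = (\<Sum>i<l. ?X ^ i)"
  have X_\<Phi>: "?X ^ l - 1 = (?X - 1) * \<Phi>"
    by (simp add: \<Phi>_def power_diff_1_eq)
  have "Polynomial.coeff \<Phi> (l - 1) = 1"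
    using assms(1) by (simp add: \<Phi>_def Polynomial.coeff_sum flip: monom_altdef[of 1, simplified])
  then have "l - 1 \<le> degree \<Phi>"
    by (intro le_degree) simp
  with assms(1) have "degree \<Phi> > 0"
    by simp
  then obtain f where f: "prime_elem f" "lead_coeff f = 1" "f dvd \<Phi>"
    using monic_prime_elem_factor_exists by blast
  moreover have "f dvd ?X ^ l - 1"
    using f(3) X_\<Phi> by simp
  moreover have "\<not> f dvd ?X - 1"
  proof
    assume "f dvd ?X - 1"
    moreover have "?X - 1 = [:- 1, 1:]"
      by (simp add: one_pCons)
    then have "?X - 1 dvd \<Phi> - [:of_nat l:]"
      using dvd_iff_poly_eq_0[of "- 1" "\<Phi> - [:of_nat l:]"] by (simp add: \<Phi>_def poly_sum)
    ultimately have "f dvd \<Phi> - [:of_nat l:]"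
      by (rule dvd_trans)
    from dvd_diff[OF f(3) this] have "f dvd [:of_nat l:]"
      by simp
    moreover have "is_unit [:of_nat l :: 'a:]"
      using assms(2) by (simp add: is_unit_const_poly_iff dvd_field_iff)
    ultimately have "is_unit f"
      by (rule dvd_unit_imp_unit)
    with f(1) show False
      by (simp add: prime_elem_not_unit)
  qed
  ultimately show ?thesis
    using that by blast
qed

theorem theorem2p2:
  fixes q l :: nat
  assumes "prime_power q"
    and "card (UNIV :: 'a::{field,finite} set) = q ^ 2"
    and "prime l" and "odd l" and "\<not> l dvd q"
  shows "(\<forall>f :: 'a poly. lead_coeff f = 1 \<and> irreducible f \<and> f dvd (Polynomial.monom 1 l - 1)
            \<longrightarrow> SCRIM q f)
         \<longleftrightarrow> odd (ord l (q ^ 2)) \<and> even (ord l q)"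
proof -
  obtain p k where "prime p" and "k \<ge> 1" and "q = p ^ k"
    using assms(1) unfolding prime_power_def by blast
  moreover have "CHAR('a) = p"
    using CHAR_eq_if_card_eq_prime_power[of p "k * 2"] assms(2) calculation by (simp add: power_mult)
  ultimately have q: "q = CHAR('a) ^ k"
    by simp
  have "l \<ge> 2"
    using assms(3) prime_ge_2_nat by blast
  have monom: "Polynomial.monom 1 l - 1 = [:0, 1:] ^ l - (1 :: 'a poly)"
    by (simp add: monom_altdef)
  have orders: "(\<exists>j. [(l - 1) * q = (q ^ 2) ^ j] (mod l)) \<longleftrightarrow> odd (ord l (q ^ 2)) \<and> even (ord l q)"
    using cong_minus_iff_odd_power_cong_minus_one odd_power_cong_minus_one_iff_ord
      assms(3-5) prime_imp_coprime by metis
  have "of_nat l \<noteq> (0 :: 'a)"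
  proof
    assume "of_nat l = (0 :: 'a)"
    then have "CHAR('a) = l"
      using assms(3) prime_CHAR_finite primes_dvd_imp_eq by (metis of_nat_eq_0_iff_char_dvd)
    with assms(5) q \<open>k \<ge> 1\<close> show False
      by (simp add: dvd_power)
  qed
  then obtain f :: "'a poly" where f: "prime_elem f" "lead_coeff f = 1" "f dvd [:0, 1:] ^ l - 1"
      "\<not> f dvd [:0, 1:] - 1"
    using nontrivial_factor_of_X_power_minus_one_exists[OF \<open>l \<ge> 2\<close>] by blast
  show ?thesis
  proof
    assume all_SCRIM: "\<forall>f :: 'a poly. lead_coeff f = 1 \<and> irreducible f \<and> f dvd (Polynomial.monom 1 l - 1)
              \<longrightarrow> SCRIM q f"
    have "conj_recip_poly q f = f"
      using all_SCRIM[rule_format, of f] f monom prime_elem_imp_irreducible[OF f(1)]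
      by (simp add: SCRIM_def)
    then show "odd (ord l (q ^ 2)) \<and> even (ord l q)"
      using cong_if_conj_recip_poly_eq_self[OF assms(2) q assms(3,5) f(1,3,4)] orders by blast
  next
    assume "odd (ord l (q ^ 2)) \<and> even (ord l q)"
    then obtain j where j: "[(l - 1) * q = (q ^ 2) ^ j] (mod l)"
      using orders by blast
    show "\<forall>f :: 'a poly. lead_coeff f = 1 \<and> irreducible f \<and> f dvd (Polynomial.monom 1 l - 1)
            \<longrightarrow> SCRIM q f"
      using SCRIM_if_cong[OF assms(2) q _ _ _ _ j] monom \<open>l \<ge> 2\<close> by simp
  qed
qed

end
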